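(* Let $\beta\in(1/2,1)$, $p\asymp d^{1-\beta}$ as $d\to\infty$, and suppose $\limsup_{d\to\infty}\frac{r^2nh(\tau)}{p\log(d/p)}<2-\frac1\beta$. Then for the Bernoulli prior, $\mathbf E_0[L^2_{\pi,r}(Z)]\to1$ as $d\to\infty$.
   Context: Model: for integers $n\ge2$, $d\ge1$ and a fixed baseline mean $\theta\in\mathbb R^d$, we observe independent vectors $X_i=\theta+\Delta\theta\,\mathbf 1\{i>\tau\}+\xi_i$, $i=1,\dots,n$, $\tau\in\{1,\dots,n-1\}$, with $\xi_i$ i.i.d. $\mathcal N(0,I_d)$. $Z=(Z_n^j(s))_{j\le d,s\le n-1}$ where $Z_n^j(s)$ is the $j$-th coordinate of $Z_n(s)=\sqrt{\frac{s(n-s)}n}\bigl(\frac1s\sum_{i=1}^sX_i-\frac1{n-s}\sum_{i=s+1}^nX_i\bigr)$. $h(\tau)=\frac\tau n(1-\frac\tau n)$. Bernoulli prior: draw $m$ uniformly among $p$-element subsets of $\{1,\dots,d\}$ and set $\Delta\theta_j=\frac r{\sqrt p}$ for $j\in m$, $\Delta\theta_j=0$ otherwise. $\mathbf P_{\pi,r}$ is the resulting mixture law of $Z$, $\mathbf P_0$ its law under $\Delta\theta=0$, $L_{\pi,r}=d\mathbf P_{\pi,r}/d\mathbf P_0$. All quantities ($n,p,r,\tau$) are indexed by $d\to\infty$; $a\asymp b$ means $a/b$ is bounded above and below by positive constants. *)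

theory Defs
  imports "HOL-Probability.Probability"
begin

text \<open>Index set of the raw observations: pairs (i,j), i = time 1..n, j = coordinate 1..d.\<close>
definition Xidx :: "nat \<Rightarrow> nat \<Rightarrow> (nat \<times> nat) set" where
  "Xidx n d = {1..n} \<times> {1..d}"

text \<open>Index set of the CUSUM statistic Z: pairs (j,s), j = coordinate 1..d, s = 1..n-1.\<close>
definition Zidx :: "nat \<Rightarrow> nat \<Rightarrow> (nat \<times> nat) set" where
  "Zidx n d = {1..d} \<times> {1..n-1}"

definition X_law :: "nat \<Rightarrow> nat \<Rightarrow> nat \<Rightarrow> (nat \<Rightarrow> real) \<Rightarrow> (nat \<Rightarrow> real)
    \<Rightarrow> ((nat \<times> nat) \<Rightarrow> real) measure" where
  "X_law n d \<tau> \<theta> \<Delta> = PiM (Xidx n d)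
     (\<lambda>(i,j). density lborel (normal_density (\<theta> j + (if i > \<tau> then \<Delta> j else 0)) 1))"

definition Zstat :: "nat \<Rightarrow> nat \<Rightarrow> ((nat \<times> nat) \<Rightarrow> real) \<Rightarrow> ((nat \<times> nat) \<Rightarrow> real)" where
  "Zstat n d X = restrict (\<lambda>(j,s). sqrt (real s * real (n - s) / real n) *
      ((\<Sum>i\<in>{1..s}. X (i,j)) / real s - (\<Sum>i\<in>{s+1..n}. X (i,j)) / real (n - s))) (Zidx n d)"

definition Z_law :: "nat \<Rightarrow> nat \<Rightarrow> nat \<Rightarrow> (nat \<Rightarrow> real) \<Rightarrow> (nat \<Rightarrow> real)
    \<Rightarrow> ((nat \<times> nat) \<Rightarrow> real) measure" where
  "Z_law n d \<tau> \<theta> \<Delta> = distr (X_law n d \<tau> \<theta> \<Delta>) (PiM (Zidx n d) (\<lambda>_. lborel)) (Zstat n d)"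

definition bern_shift :: "nat \<Rightarrow> real \<Rightarrow> nat set \<Rightarrow> nat \<Rightarrow> real" where
  "bern_shift p r m j = (if j \<in> m then r / sqrt (real p) else 0)"

definition bern_prior_law :: "nat \<Rightarrow> nat \<Rightarrow> nat \<Rightarrow> (nat \<Rightarrow> real) \<Rightarrow> nat \<Rightarrow> real
    \<Rightarrow> ((nat \<times> nat) \<Rightarrow> real) measure" where
  "bern_prior_law n d \<tau> \<theta> p r =
     measure_pmf (pmf_of_set {m. m \<subseteq> {1..d} \<and> card m = p}) \<bind>
       (\<lambda>m. Z_law n d \<tau> \<theta> (bern_shift p r m))"

definition null_law :: "nat \<Rightarrow> nat \<Rightarrow> nat \<Rightarrow> (nat \<Rightarrow> real) \<Rightarrow> ((nat \<times> nat) \<Rightarrow> real) measure" where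
  "null_law n d \<tau> \<theta> = Z_law n d \<tau> \<theta> (\<lambda>_. 0)"

definition LR :: "nat \<Rightarrow> nat \<Rightarrow> nat \<Rightarrow> (nat \<Rightarrow> real) \<Rightarrow> nat \<Rightarrow> real
    \<Rightarrow> ((nat \<times> nat) \<Rightarrow> real) \<Rightarrow> ennreal" where
  "LR n d \<tau> \<theta> p r = RN_deriv (null_law n d \<tau> \<theta>) (bern_prior_law n d \<tau> \<theta> p r)"

definition second_moment :: "nat \<Rightarrow> nat \<Rightarrow> nat \<Rightarrow> (nat \<Rightarrow> real) \<Rightarrow> nat \<Rightarrow> real \<Rightarrow> ennreal" where
  "second_moment n d \<tau> \<theta> p r = (\<integral>\<^sup>+ z. (LR n d \<tau> \<theta> p r z)\<^sup>2 \<partial>null_law n d \<tau> \<theta>)"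

definition hfun :: "nat \<Rightarrow> nat \<Rightarrow> real" where
  "hfun n \<tau> = (real \<tau> / real n) * (1 - real \<tau> / real n)"

end

theory Submission
  imports Defs
begin

text \<open>
  Writing each observation column as a multiple of the contrast \<open>c\<^sub>i = 1{i > \<tau>} - (n - \<tau>)/n\<close>
  plus a centred baseline, the likelihood ratio of the shift \<open>\<Delta>\<theta>\<close> becomes a Gaussian exponential
  tilt in the single column \<open>Z(\<cdot>, \<tau>)\<close> of the CUSUM statistic.  Hence, with \<open>q = n h(\<tau>)\<close>,
  \<open>E\<^sub>0[L\<^sup>2] = E exp(q \<langle>\<Delta>\<theta>, \<Delta>\<theta>'\<rangle>) = E exp(A |m \<inter> m'|)\<close> for two independent uniform supports
  and \<open>A = r\<^sup>2 q / p\<close>.  Expanding \<open>(1 + (e\<^sup>A - 1))\<^sup>|m \<inter> m'|\<close> over subsets and bounding the number of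
  supports containing a given set gives \<open>1 \<le> E\<^sub>0[L\<^sup>2] \<le> exp((e\<^sup>A - 1) p\<^sup>2 / d)\<close>.  The hypotheses
  give \<open>e\<^sup>A \<le> (d/p)\<^sup>k\<close> with \<open>k < 2 - 1/\<beta>\<close>, so the exponent is \<open>O(d\<^sup>-\<^sup>\<epsilon>)\<close> for
  \<open>\<epsilon> = 2\<beta> - 1 - \<beta>k > 0\<close>.
\<close>

section \<open>Gaussian product measures\<close>

lemma PiM_density:
  fixes M :: "'i \<Rightarrow> 'a measure"
  assumes fin: "finite I" and M: "\<And>i. prob_space (M i)"
    and N: "\<And>i. prob_space (density (M i) (f i))"
    and f[measurable]: "\<And>i. f i \<in> borel_measurable (M i)"
  shows "PiM I (\<lambda>i. density (M i) (f i)) = density (PiM I M) (\<lambda>x. \<Prod>i\<in>I. f i (x i))"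
proof -
  interpret NN: product_prob_space "\<lambda>i. density (M i) (f i)"
    by (rule product_prob_spaceI[OF N])
  interpret MM: product_prob_space M
    by (rule product_prob_spaceI[OF M])
  have "density (PiM I M) (\<lambda>x. \<Prod>i\<in>I. f i (x i)) = PiM I (\<lambda>i. density (M i) (f i))"
  proof (rule NN.PiM_eqI[OF fin])
    show "sets (density (PiM I M) (\<lambda>x. \<Prod>i\<in>I. f i (x i))) = sets (PiM I (\<lambda>i. density (M i) (f i)))"
      unfolding sets_density by (rule sets_PiM_cong) simp_all
  next
    fix A assume "\<And>i. i \<in> I \<Longrightarrow> A i \<in> sets (density (M i) (f i))"
    then have A: "\<And>i. i \<in> I \<Longrightarrow> A i \<in> sets (M i)" by simp
    have PA: "Pi\<^sub>E I A \<in> sets (PiM I M)"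
      using A by (intro sets_PiM_I_finite fin) auto
    have ind: "indicator (Pi\<^sub>E I A) x = (\<Prod>i\<in>I. indicator (A i) (x i) :: ennreal)"
      if "x \<in> space (PiM I M)" for x
      using that fin by (auto simp: indicator_def PiE_iff space_PiM intro!: prod_zero)
    have "emeasure (density (PiM I M) (\<lambda>x. \<Prod>i\<in>I. f i (x i))) (Pi\<^sub>E I A)
       = (\<integral>\<^sup>+ x. (\<Prod>i\<in>I. f i (x i)) * indicator (Pi\<^sub>E I A) x \<partial>PiM I M)"
      by (rule emeasure_density[OF _ PA]) (intro borel_measurable_prod_ennreal; measurable)
    also have "\<dots> = (\<integral>\<^sup>+ x. (\<Prod>i\<in>I. f i (x i) * indicator (A i) (x i)) \<partial>PiM I M)"
      by (intro nn_integral_cong) (simp add: ind prod.distrib)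
    also have "\<dots> = (\<Prod>i\<in>I. \<integral>\<^sup>+ y. f i y * indicator (A i) y \<partial>M i)"
      using A by (intro MM.product_nn_integral_prod fin) auto
    also have "\<dots> = (\<Prod>i\<in>I. emeasure (density (M i) (f i)) (A i))"
      using A by (intro prod.cong refl) (simp add: emeasure_density)
    finally show "emeasure (density (PiM I M) (\<lambda>x. \<Prod>i\<in>I. f i (x i))) (Pi\<^sub>E I A)
        = (\<Prod>i\<in>I. emeasure (density (M i) (f i)) (A i))" .
  qed
  then show ?thesis by simp
qed

lemma distr_PiM_componentwise:
  fixes M N :: "'i \<Rightarrow> 'a measure"
  assumes fin: "finite I" and M: "\<And>i. prob_space (M i)" and N: "\<And>i. prob_space (N i)"
    and g[measurable]: "\<And>i. i \<in> I \<Longrightarrow> g i \<in> measurable (M i) (N i)"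
    and eq: "\<And>i. i \<in> I \<Longrightarrow> distr (M i) (N i) (g i) = N i"
  shows "distr (PiM I M) (PiM I N) (\<lambda>x. \<lambda>i\<in>I. g i (x i)) = PiM I N"
proof -
  interpret NN: product_prob_space N by (rule product_prob_spaceI[OF N])
  interpret MM: product_prob_space M by (rule product_prob_spaceI[OF M])
  have meas: "(\<lambda>x. \<lambda>i\<in>I. g i (x i)) \<in> measurable (PiM I M) (PiM I N)"
    by measurable
  show ?thesis
  proof (rule NN.PiM_eqI[OF fin])
    fix A assume A: "\<And>i. i \<in> I \<Longrightarrow> A i \<in> sets (N i)"
    have "Pi\<^sub>E I A \<in> sets (PiM I N)"
      using A by (intro sets_PiM_I_finite fin) auto
    moreover have "(\<lambda>x. \<lambda>i\<in>I. g i (x i)) -` Pi\<^sub>E I A \<inter> space (PiM I M)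
        = Pi\<^sub>E I (\<lambda>i. g i -` A i \<inter> space (M i))"
      by (auto simp: space_PiM PiE_iff)
    ultimately have "emeasure (distr (PiM I M) (PiM I N) (\<lambda>x. \<lambda>i\<in>I. g i (x i))) (Pi\<^sub>E I A)
        = emeasure (PiM I M) (Pi\<^sub>E I (\<lambda>i. g i -` A i \<inter> space (M i)))"
      using meas by (simp add: emeasure_distr)
    also have "\<dots> = (\<Prod>i\<in>I. emeasure (M i) (g i -` A i \<inter> space (M i)))"
      using A g by (intro MM.emeasure_PiM fin) (auto intro: measurable_sets)
    also have "\<dots> = (\<Prod>i\<in>I. emeasure (distr (M i) (N i) (g i)) (A i))"
      using A by (intro prod.cong refl) (simp add: emeasure_distr)
    finally show "emeasure (distr (PiM I M) (PiM I N) (\<lambda>x. \<lambda>i\<in>I. g i (x i))) (Pi\<^sub>E I A)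
        = (\<Prod>i\<in>I. emeasure (N i) (A i))"
      by (simp add: eq)
  qed simp
qed

lemma normal_density_shift:
  "normal_density (\<mu> + \<delta>) 1 x = normal_density \<mu> 1 x * exp (\<delta> * (x - \<mu>) - \<delta>\<^sup>2 / 2)"
proof -
  have "- ((x - (\<mu> + \<delta>))\<^sup>2 / 2) = - ((x - \<mu>)\<^sup>2 / 2) + (\<delta> * (x - \<mu>) - \<delta>\<^sup>2 / 2)"
    by (simp add: power2_eq_square field_simps)
  then show ?thesis
    unfolding normal_density_def by (simp add: exp_add[symmetric])
qed

lemma density_normal_shift:
  "density lborel (normal_density (\<mu> + \<delta>) 1) =
   density (density lborel (normal_density \<mu> 1)) (\<lambda>x. ennreal (exp (\<delta> * (x - \<mu>) - \<delta>\<^sup>2 / 2)))"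
  by (subst density_density_eq) (auto simp: normal_density_shift ennreal_mult'')

lemma distr_normal_density_plus:
  "distr (density lborel (normal_density \<mu> 1)) lborel (\<lambda>x. x + \<delta>) = density lborel (normal_density (\<mu> + \<delta>) 1)"
proof -
  have "density lborel (normal_density (\<mu> + \<delta>) 1)
      = density (distr lborel borel ((+) \<delta>)) (normal_density (\<mu> + \<delta>) 1)"
    by (simp add: lborel_distr_plus)
  also have "\<dots> = distr (density lborel (\<lambda>x. ennreal (normal_density (\<mu> + \<delta>) 1 (\<delta> + x)))) borel ((+) \<delta>)"
    by (rule density_distr) auto
  also have "(\<lambda>x. ennreal (normal_density (\<mu> + \<delta>) 1 (\<delta> + x))) = (\<lambda>x. ennreal (normal_density \<mu> 1 x))"
    by (simp add: normal_density_def algebra_simps)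
  also have "distr (density lborel (\<lambda>x. ennreal (normal_density \<mu> 1 x))) borel ((+) \<delta>)
     = distr (density lborel (normal_density \<mu> 1)) lborel (\<lambda>x. x + \<delta>)"
    by (rule distr_cong) (auto simp: add.commute)
  finally show ?thesis ..
qed

section \<open>The likelihood ratio of the CUSUM statistic\<close>

definition cusum_scale :: "nat \<Rightarrow> nat \<Rightarrow> real" where
  "cusum_scale n \<tau> = real \<tau> * real (n - \<tau>) / real n"

definition cusum_contrast :: "nat \<Rightarrow> nat \<Rightarrow> nat \<Rightarrow> real" where
  "cusum_contrast n \<tau> i = (if \<tau> < i then 1 else 0) - real (n - \<tau>) / real n"

text \<open>\<open>dP\<^sub>a/dP\<^sub>0\<close> for the law of \<open>Z\<close> under the shift \<open>a\<close>; it depends on \<open>Z\<close> only through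
  the column \<open>Z(\<cdot>, \<tau>)\<close>.\<close>

definition cusum_lr :: "nat \<Rightarrow> nat \<Rightarrow> nat \<Rightarrow> (nat \<Rightarrow> real) \<Rightarrow> ((nat \<times> nat) \<Rightarrow> real) \<Rightarrow> real" where
  "cusum_lr n d \<tau> a z = exp ((\<Sum>j\<in>{1..d}. a j * (- sqrt (cusum_scale n \<tau>)) * z (j, \<tau>))
     - cusum_scale n \<tau> * (\<Sum>j\<in>{1..d}. (a j)\<^sup>2) / 2)"

lemma cusum_lr_nonneg: "0 \<le> cusum_lr n d \<tau> a z"
  by (simp add: cusum_lr_def)

lemma cusum_scale_eq_hfun: "0 < n \<Longrightarrow> \<tau> \<le> n \<Longrightarrow> cusum_scale n \<tau> = real n * hfun n \<tau>"
  by (simp add: cusum_scale_def hfun_def of_nat_diff field_simps)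

lemma hfun_nonneg: "\<tau> \<le> n \<Longrightarrow> 0 \<le> hfun n \<tau>"
  by (cases "n = 0") (simp_all add: hfun_def divide_le_eq_1)

lemma sum_split_interval:
  fixes f :: "nat \<Rightarrow> 'b::comm_monoid_add"
  assumes "\<tau> \<le> n"
  shows "(\<Sum>i\<in>{1..n}. f i) = (\<Sum>i\<in>{1..\<tau>}. f i) + (\<Sum>i\<in>{\<tau>+1..n}. f i)"
proof -
  have "{1..n} = {1..\<tau>} \<union> {\<tau>+1..n}" using assms by auto
  then show ?thesis by (simp add: sum.union_disjoint ivl_disj_int)
qed

lemma cusum_contrast_sums:
  assumes "1 \<le> \<tau>" "\<tau> < n"
  shows "(\<Sum>i\<in>{1..n}. cusum_contrast n \<tau> i) = 0"
    and "(\<Sum>i\<in>{1..n}. (cusum_contrast n \<tau> i)\<^sup>2) = cusum_scale n \<tau>"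
    and "(\<Sum>i\<in>{1..n}. cusum_contrast n \<tau> i * y i) = - cusum_scale n \<tau> *
          ((\<Sum>i\<in>{1..\<tau>}. y i) / real \<tau> - (\<Sum>i\<in>{\<tau>+1..n}. y i) / real (n - \<tau>))"
proof -
  have le: "\<tau> \<le> n" using assms by simp
  have n: "real n > 0" "real (n - \<tau>) > 0" "real \<tau> > 0" using assms by simp_all
  have split: "(\<Sum>i\<in>{1..n}. h (cusum_contrast n \<tau> i) i)
      = (\<Sum>i\<in>{1..\<tau>}. h (- (real (n - \<tau>) / real n)) i) + (\<Sum>i\<in>{\<tau>+1..n}. h (real \<tau> / real n) i)" for h
    using assms by (subst sum_split_interval[OF le], intro arg_cong2[where f="(+)"] sum.cong)
      (auto simp: cusum_contrast_def field_simps of_nat_diff)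
  have card: "real (card {\<tau>+1..n}) = real n - real \<tau>" using le by (simp add: of_nat_diff)
  show "(\<Sum>i\<in>{1..n}. cusum_contrast n \<tau> i) = 0"
    using split[of "\<lambda>c i. c"] n card by (simp add: of_nat_diff le field_simps)
  show "(\<Sum>i\<in>{1..n}. (cusum_contrast n \<tau> i)\<^sup>2) = cusum_scale n \<tau>"
  proof -
    have "(\<Sum>i\<in>{1..n}. (cusum_contrast n \<tau> i)\<^sup>2)
        = real \<tau> * (real (n - \<tau>) / real n)\<^sup>2 + (real n - real \<tau>) * (real \<tau> / real n)\<^sup>2"
      using split[of "\<lambda>c i. c\<^sup>2"] card by simp
    also have "\<dots> = cusum_scale n \<tau>"
      using n by (simp add: cusum_scale_def of_nat_diff le field_simps power2_eq_square)
    finally show ?thesis .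
  qed
  show "(\<Sum>i\<in>{1..n}. cusum_contrast n \<tau> i * y i) = - cusum_scale n \<tau> *
          ((\<Sum>i\<in>{1..\<tau>}. y i) / real \<tau> - (\<Sum>i\<in>{\<tau>+1..n}. y i) / real (n - \<tau>))"
  proof -
    have "(\<Sum>i\<in>{1..n}. cusum_contrast n \<tau> i * y i) = - (real (n - \<tau>) / real n) * (\<Sum>i\<in>{1..\<tau>}. y i)
        + (real \<tau> / real n) * (\<Sum>i\<in>{\<tau>+1..n}. y i)"
      using split[of "\<lambda>c i. c * y i"] by (simp only: sum_distrib_left)
    also have "\<dots> = - cusum_scale n \<tau> * ((\<Sum>i\<in>{1..\<tau>}. y i) / real \<tau> - (\<Sum>i\<in>{\<tau>+1..n}. y i) / real (n - \<tau>))"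
      using n by (simp add: cusum_scale_def field_simps)
    finally show ?thesis .
  qed
qed

lemma Zstat_measurable[measurable]:
  "Zstat n d \<in> measurable (PiM (Xidx n d) (\<lambda>_. lborel)) (PiM (Zidx n d) (\<lambda>_. lborel))"
proof -
  have partial_sums: "(\<lambda>x. \<Sum>i\<in>I. x (i, j)) \<in> borel_measurable (PiM (Xidx n d) (\<lambda>_. lborel))"
    if "I \<subseteq> {1..n}" "j \<in> {1..d}" for I j
    using that by (intro borel_measurable_sum measurable_component_singleton) (auto simp: Xidx_def)
  show ?thesis
    unfolding Zstat_def
    by (intro measurable_restrict) (auto simp: Zidx_def split_beta intro!: borel_measurable_times
        borel_measurable_diff borel_measurable_divide borel_measurable_const partial_sums)
qed

lemma sets_X_law: "sets (X_law n d \<tau> \<theta> \<Delta>) = sets (PiM (Xidx n d) (\<lambda>_. lborel))"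
  unfolding X_law_def by (rule sets_PiM_cong) auto

lemma prob_space_X_law: "prob_space (X_law n d \<tau> \<theta> \<Delta>)"
  unfolding X_law_def by (rule prob_space_PiM) (auto intro: prob_space_normal_density)

lemma Zstat_measurable_X_law[measurable]:
  "Zstat n d \<in> measurable (X_law n d \<tau> \<theta> \<Delta>) (PiM (Zidx n d) (\<lambda>_. lborel))"
  using Zstat_measurable by (simp add: measurable_cong_sets[OF sets_X_law refl])

lemma sets_Z_law: "sets (Z_law n d \<tau> \<theta> \<Delta>) = sets (PiM (Zidx n d) (\<lambda>_. lborel))"
  unfolding Z_law_def by simp

lemma prob_space_Z_law: "prob_space (Z_law n d \<tau> \<theta> \<Delta>)"
  unfolding Z_law_def by (intro prob_space.prob_space_distr prob_space_X_law Zstat_measurable_X_law)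

lemma sets_null_law: "sets (null_law n d \<tau> \<theta>) = sets (PiM (Zidx n d) (\<lambda>_. lborel))"
  unfolding null_law_def by (rule sets_Z_law)

lemma prob_space_null_law: "prob_space (null_law n d \<tau> \<theta>)"
  unfolding null_law_def by (rule prob_space_Z_law)

lemma cusum_lr_measurable[measurable]:
  assumes "1 \<le> \<tau>" "\<tau> < n"
  shows "cusum_lr n d \<tau> a \<in> borel_measurable (PiM (Zidx n d) (\<lambda>_. lborel))"
proof -
  have "(\<lambda>z. \<Sum>j\<in>{1..d}. a j * (- sqrt (cusum_scale n \<tau>)) * z (j, \<tau>))
      \<in> borel_measurable (PiM (Zidx n d) (\<lambda>_. lborel))"
    using assms by (intro borel_measurable_sum borel_measurable_times borel_measurable_const
        measurable_component_singleton) (auto simp: Zidx_def)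
  then show ?thesis unfolding cusum_lr_def by measurable
qed

lemma cusum_lr_measurable_null_law[measurable]:
  assumes "1 \<le> \<tau>" "\<tau> < n"
  shows "cusum_lr n d \<tau> a \<in> borel_measurable (null_law n d \<tau> \<theta>)"
  using cusum_lr_measurable[OF assms] by (simp add: measurable_cong_sets[OF sets_null_law refl])

lemma Zstat_add_column_const:
  assumes "\<And>i j. (i, j) \<in> Xidx n d \<Longrightarrow> y (i, j) = x (i, j) + c j"
  shows "Zstat n d y = Zstat n d x"
  unfolding Zstat_def
proof (rule restrict_ext, clarify)
  fix j s assume "(j, s) \<in> Zidx n d"
  then have j: "j \<in> {1..d}" and s: "1 \<le> s" "s < n" by (auto simp: Zidx_def)
  have sums: "(\<Sum>i\<in>{1..s}. y (i, j)) = (\<Sum>i\<in>{1..s}. x (i, j)) + real s * c j"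
    "(\<Sum>i\<in>{s+1..n}. y (i, j)) = (\<Sum>i\<in>{s+1..n}. x (i, j)) + real (n - s) * c j"
    using j s by (simp_all add: assms Xidx_def sum.distrib)
  have "real s > 0" "real (n - s) > 0" using s by auto
  then show "sqrt (real s * real (n - s) / real n) *
          ((\<Sum>i\<in>{1..s}. y (i, j)) / real s - (\<Sum>i\<in>{s+1..n}. y (i, j)) / real (n - s)) =
        sqrt (real s * real (n - s) / real n) *
          ((\<Sum>i\<in>{1..s}. x (i, j)) / real s - (\<Sum>i\<in>{s+1..n}. x (i, j)) / real (n - s))"
    unfolding sums by (simp add: field_simps)
qed

lemma null_law_baseline_invariant: "Z_law n d \<tau> \<theta>' (\<lambda>_. 0) = null_law n d \<tau> \<theta>"
proof -
  let ?M = "\<lambda>\<theta>. \<lambda>(i::nat, j). density lborel (normal_density (\<theta> j) 1)"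
  let ?X = "\<lambda>\<theta>. X_law n d \<tau> \<theta> (\<lambda>_. 0)"
  define sh where "sh x = (\<lambda>ij\<in>Xidx n d. x ij + (\<theta>' (snd ij) - \<theta> (snd ij)))" for x :: "nat \<times> nat \<Rightarrow> real"
  have X0: "?X \<theta>'' = PiM (Xidx n d) (?M \<theta>'')" for \<theta>''
    unfolding X_law_def by simp
  have M: "prob_space (?M \<theta>'' ij)" for \<theta>'' ij
    by (cases ij) (simp add: prob_space_normal_density)
  have "distr (?X \<theta>) (?X \<theta>') sh = ?X \<theta>'"
    unfolding X0 sh_def
  proof (rule distr_PiM_componentwise[OF _ M M])
    fix ij :: "nat \<times> nat"
    obtain i j where ij: "ij = (i, j)" by (cases ij)
    show "(\<lambda>y. y + (\<theta>' (snd ij) - \<theta> (snd ij))) \<in> ?M \<theta> ij \<rightarrow>\<^sub>M ?M \<theta>' ij"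
      unfolding ij by (subst measurable_cong_sets[of _ borel _ borel]) simp_all
    have "distr (?M \<theta> ij) (?M \<theta>' ij) (\<lambda>y. y + (\<theta>' (snd ij) - \<theta> (snd ij)))
        = distr (density lborel (normal_density (\<theta> j) 1)) lborel (\<lambda>y. y + (\<theta>' j - \<theta> j))"
      unfolding ij by (rule distr_cong) auto
    then show "distr (?M \<theta> ij) (?M \<theta>' ij) (\<lambda>y. y + (\<theta>' (snd ij) - \<theta> (snd ij))) = ?M \<theta>' ij"
      by (simp add: distr_normal_density_plus ij)
  qed (simp add: Xidx_def)
  moreover have "sh \<in> measurable (?X \<theta>) (?X \<theta>')"
    unfolding measurable_cong_sets[OF sets_X_law sets_X_law] sh_def by measurable
  ultimately have "Z_law n d \<tau> \<theta>' (\<lambda>_. 0) = distr (?X \<theta>) (PiM (Zidx n d) (\<lambda>_. lborel)) (Zstat n d \<circ> sh)"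
    unfolding Z_law_def by (metis distr_distr Zstat_measurable_X_law)
  also have "\<dots> = null_law n d \<tau> \<theta>"
    unfolding null_law_def Z_law_def
    by (intro distr_cong refl) (simp add: Zstat_add_column_const[where c="\<lambda>j. \<theta>' j - \<theta> j"] sh_def)
  finally show ?thesis .
qed

lemma cusum_contrast_column:
  assumes tau: "1 \<le> \<tau>" "\<tau> < n" and j: "j \<in> {1..d}"
  shows "(\<Sum>i\<in>{1..n}. cusum_contrast n \<tau> i * x (i, j)) = - sqrt (cusum_scale n \<tau>) * Zstat n d x (j, \<tau>)"
proof -
  let ?q = "cusum_scale n \<tau>"
  let ?D = "(\<Sum>i\<in>{1..\<tau>}. x (i, j)) / real \<tau> - (\<Sum>i\<in>{\<tau>+1..n}. x (i, j)) / real (n - \<tau>)"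
  have "(j, \<tau>) \<in> Zidx n d" using tau j by (auto simp: Zidx_def)
  then have Z: "Zstat n d x (j, \<tau>) = sqrt ?q * ?D" by (simp add: Zstat_def cusum_scale_def)
  have "0 \<le> ?q" by (simp add: cusum_scale_def)
  have "(\<Sum>i\<in>{1..n}. cusum_contrast n \<tau> i * x (i, j)) = - ?q * ?D"
    by (rule cusum_contrast_sums(3)[OF tau])
  also have "\<dots> = - sqrt ?q * (sqrt ?q * ?D)"
    using \<open>0 \<le> ?q\<close> by (simp add: mult.assoc[symmetric])
  finally show ?thesis unfolding Z .
qed

lemma cusum_exponent_identity:
  assumes "1 \<le> \<tau>" "\<tau> < n"
  shows "(\<Sum>(i, j)\<in>Xidx n d. \<Delta> j * cusum_contrast n \<tau> i * (x (i, j) - \<mu> j)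
            - (\<Delta> j * cusum_contrast n \<tau> i)\<^sup>2 / 2)
       = (\<Sum>j\<in>{1..d}. \<Delta> j * (- sqrt (cusum_scale n \<tau>)) * Zstat n d x (j, \<tau>))
            - cusum_scale n \<tau> * (\<Sum>j\<in>{1..d}. (\<Delta> j)\<^sup>2) / 2"
proof -
  let ?c = "cusum_contrast n \<tau>" and ?q = "cusum_scale n \<tau>"
  have "(\<Sum>(i, j)\<in>Xidx n d. \<Delta> j * ?c i * (x (i, j) - \<mu> j) - (\<Delta> j * ?c i)\<^sup>2 / 2)
      = (\<Sum>i\<in>{1..n}. \<Sum>j\<in>{1..d}. \<Delta> j * ?c i * (x (i, j) - \<mu> j) - (\<Delta> j * ?c i)\<^sup>2 / 2)"
    unfolding Xidx_def by (simp add: sum.cartesian_product split_beta)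
  also have "\<dots> = (\<Sum>j\<in>{1..d}. \<Sum>i\<in>{1..n}. \<Delta> j * ?c i * (x (i, j) - \<mu> j) - (\<Delta> j * ?c i)\<^sup>2 / 2)"
    by (rule sum.swap)
  also have "\<dots> = (\<Sum>j\<in>{1..d}. \<Delta> j * (\<Sum>i\<in>{1..n}. ?c i * x (i, j)) - \<Delta> j * \<mu> j * (\<Sum>i\<in>{1..n}. ?c i)
        - (\<Delta> j)\<^sup>2 / 2 * (\<Sum>i\<in>{1..n}. (?c i)\<^sup>2))"
    by (intro sum.cong refl) (simp add: sum_subtractf sum_distrib_left algebra_simps
        power_mult_distrib sum_divide_distrib sum.distrib)
  also have "\<dots> = (\<Sum>j\<in>{1..d}. \<Delta> j * (- sqrt ?q) * Zstat n d x (j, \<tau>) - ?q * (\<Delta> j)\<^sup>2 / 2)"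
  proof (intro sum.cong refl)
    fix j assume "j \<in> {1..d}"
    then show "\<Delta> j * (\<Sum>i\<in>{1..n}. ?c i * x (i, j)) - \<Delta> j * \<mu> j * (\<Sum>i\<in>{1..n}. ?c i)
        - (\<Delta> j)\<^sup>2 / 2 * (\<Sum>i\<in>{1..n}. (?c i)\<^sup>2) = \<Delta> j * (- sqrt ?q) * Zstat n d x (j, \<tau>) - ?q * (\<Delta> j)\<^sup>2 / 2"
      unfolding cusum_contrast_column[OF assms \<open>j \<in> {1..d}\<close>] cusum_contrast_sums(1,2)[OF assms] by simp
  qed
  also have "\<dots> = (\<Sum>j\<in>{1..d}. \<Delta> j * (- sqrt ?q) * Zstat n d x (j, \<tau>)) - ?q * (\<Sum>j\<in>{1..d}. (\<Delta> j)\<^sup>2) / 2"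
    by (simp add: sum_subtractf sum_distrib_left sum_divide_distrib)
  finally show ?thesis .
qed

text \<open>Recentring the baseline at \<open>\<mu> = \<theta> + \<Delta> (n - \<tau>)/n\<close> turns the mean of \<open>X\<^sub>i\<^sub>j\<close> into
  \<open>\<mu>\<^sub>j + \<Delta>\<^sub>j c\<^sub>i\<close>, so the product of the Gaussian density ratios only involves the contrast.\<close>

lemma X_law_density:
  fixes \<theta> \<Delta> :: "nat \<Rightarrow> real"
  assumes tau: "1 \<le> \<tau>" "\<tau> < n"
  defines "\<mu> \<equiv> \<lambda>j. \<theta> j + \<Delta> j * real (n - \<tau>) / real n"
  shows "X_law n d \<tau> \<theta> \<Delta> = density (X_law n d \<tau> \<mu> (\<lambda>_. 0)) (\<lambda>x. ennreal (cusum_lr n d \<tau> \<Delta> (Zstat n d x)))"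
proof -
  define f where "f ij = (\<lambda>x. ennreal (exp (\<Delta> (snd ij) * cusum_contrast n \<tau> (fst ij) * (x - \<mu> (snd ij))
      - (\<Delta> (snd ij) * cusum_contrast n \<tau> (fst ij))\<^sup>2 / 2)))" for ij :: "nat \<times> nat"
  define M where "M ij = density lborel (normal_density (\<mu> (snd ij)) 1)" for ij :: "nat \<times> nat"
  have component: "density lborel (normal_density (\<theta> j + (if \<tau> < i then \<Delta> j else 0)) 1) = density (M (i, j)) (f (i, j))"
    for i j
  proof -
    have "\<theta> j + (if \<tau> < i then \<Delta> j else 0) = \<mu> j + \<Delta> j * cusum_contrast n \<tau> i"
      using tau by (simp add: \<mu>_def cusum_contrast_def field_simps)
    then show ?thesis
      by (simp add: density_normal_shift M_def f_def)
  qed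
  have M: "prob_space (M ij)" for ij
    by (simp add: M_def prob_space_normal_density)
  have f: "f ij \<in> borel_measurable (M ij)" for ij
    unfolding f_def M_def measurable_cong_sets[OF sets_density refl] by simp
  have "X_law n d \<tau> \<theta> \<Delta> = PiM (Xidx n d) (\<lambda>ij. density (M ij) (f ij))"
    unfolding X_law_def by (intro PiM_cong refl) (auto simp: component)
  also have "\<dots> = density (PiM (Xidx n d) M) (\<lambda>x. \<Prod>ij\<in>Xidx n d. f ij (x ij))"
    using M f by (intro PiM_density) (auto simp: Xidx_def component[symmetric] prob_space_normal_density)
  also have "PiM (Xidx n d) M = X_law n d \<tau> \<mu> (\<lambda>_. 0)"
    unfolding X_law_def M_def by (intro PiM_cong refl) auto
  also have "(\<lambda>x. \<Prod>ij\<in>Xidx n d. f ij (x ij)) = (\<lambda>x. ennreal (cusum_lr n d \<tau> \<Delta> (Zstat n d x)))"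
  proof
    fix x
    have "(\<Prod>ij\<in>Xidx n d. f ij (x ij)) = ennreal (exp (\<Sum>(i, j)\<in>Xidx n d.
        \<Delta> j * cusum_contrast n \<tau> i * (x (i, j) - \<mu> j) - (\<Delta> j * cusum_contrast n \<tau> i)\<^sup>2 / 2))"
      unfolding f_def by (simp add: prod_ennreal exp_sum Xidx_def split_beta)
    then show "(\<Prod>ij\<in>Xidx n d. f ij (x ij)) = ennreal (cusum_lr n d \<tau> \<Delta> (Zstat n d x))"
      by (simp add: cusum_exponent_identity[OF tau] cusum_lr_def)
  qed
  finally show ?thesis .
qed

lemma Z_law_density:
  assumes tau: "1 \<le> \<tau>" "\<tau> < n"
  shows "Z_law n d \<tau> \<theta> \<Delta> = density (null_law n d \<tau> \<theta>) (\<lambda>z. ennreal (cusum_lr n d \<tau> \<Delta> z))"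
proof -
  let ?\<mu> = "\<lambda>j. \<theta> j + \<Delta> j * real (n - \<tau>) / real n"
  have "Z_law n d \<tau> \<theta> \<Delta> = density (Z_law n d \<tau> ?\<mu> (\<lambda>_. 0)) (\<lambda>z. ennreal (cusum_lr n d \<tau> \<Delta> z))"
    unfolding Z_law_def X_law_density[OF tau, of d \<theta> \<Delta>]
    using cusum_lr_measurable[OF tau, of d \<Delta>] by (intro density_distr[symmetric] Zstat_measurable_X_law) simp
  then show ?thesis
    by (simp add: null_law_baseline_invariant[where \<theta> = \<theta>])
qed

lemma nn_integral_cusum_lr:
  assumes "1 \<le> \<tau>" "\<tau> < n"
  shows "(\<integral>\<^sup>+ z. ennreal (cusum_lr n d \<tau> a z) \<partial>null_law n d \<tau> \<theta>) = 1"
proof -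
  interpret prob_space "Z_law n d \<tau> \<theta> a" by (rule prob_space_Z_law)
  have "(\<integral>\<^sup>+ z. ennreal (cusum_lr n d \<tau> a z) \<partial>null_law n d \<tau> \<theta>)
      = (\<integral>\<^sup>+ z. ennreal (cusum_lr n d \<tau> a z) * indicator (space (null_law n d \<tau> \<theta>)) z \<partial>null_law n d \<tau> \<theta>)"
    by (intro nn_integral_cong) simp
  also have "\<dots> = emeasure (Z_law n d \<tau> \<theta> a) (space (Z_law n d \<tau> \<theta> a))"
    using cusum_lr_measurable_null_law[OF assms]
    by (simp add: Z_law_density[OF assms] emeasure_density)
  finally show ?thesis
    by (simp add: emeasure_space_1)
qed

lemma cusum_lr_mult:
  "cusum_lr n d \<tau> a z * cusum_lr n d \<tau> b z
     = cusum_lr n d \<tau> (\<lambda>j. a j + b j) z * exp (cusum_scale n \<tau> * (\<Sum>j\<in>{1..d}. a j * b j))"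
proof -
  let ?s = "- sqrt (cusum_scale n \<tau>)"
  have linear: "(\<Sum>j\<in>{1..d}. (a j + b j) * ?s * z (j, \<tau>))
      = (\<Sum>j\<in>{1..d}. a j * ?s * z (j, \<tau>)) + (\<Sum>j\<in>{1..d}. b j * ?s * z (j, \<tau>))"
    by (simp only: sum.distrib[symmetric]) (simp add: algebra_simps)
  have quadratic: "(\<Sum>j\<in>{1..d}. (a j + b j)\<^sup>2)
      = (\<Sum>j\<in>{1..d}. (a j)\<^sup>2) + (\<Sum>j\<in>{1..d}. (b j)\<^sup>2) + 2 * (\<Sum>j\<in>{1..d}. a j * b j)"
    by (simp add: power2_sum sum.distrib sum_distrib_left mult.assoc)
  show ?thesis
    unfolding cusum_lr_def exp_add[symmetric] by (simp only: linear quadratic) (simp add: field_simps)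
qed

section \<open>The second moment under the Bernoulli prior\<close>

definition supports :: "nat \<Rightarrow> nat \<Rightarrow> nat set set" where
  "supports d p = {m. m \<subseteq> {1..d} \<and> card m = p}"

lemma finite_supports: "finite (supports d p)"
  unfolding supports_def by (rule finite_subset[of _ "Pow {1..d}"]) auto

lemma supports_nonempty: "p \<le> d \<Longrightarrow> supports d p \<noteq> {}"
  using atLeastAtMost_iff by (auto simp: supports_def intro!: exI[of _ "{1..p}"])

lemma card_supports: "card (supports d p) = d choose p"
  unfolding supports_def using n_subsets[of "{1..d}" p] by simp

lemma bind_pmf_of_set_density:
  fixes f :: "'i \<Rightarrow> 'a \<Rightarrow> real"
  assumes S: "finite S" "S \<noteq> {}"
    and f[measurable]: "\<And>i. f i \<in> borel_measurable M" and f_nonneg: "\<And>i z. 0 \<le> f i z"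
    and prob: "\<And>i. prob_space (density M (\<lambda>z. ennreal (f i z)))"
  shows "measure_pmf (pmf_of_set S) \<bind> (\<lambda>i. density M (\<lambda>z. ennreal (f i z)))
       = density M (\<lambda>z. ennreal ((\<Sum>i\<in>S. f i z) / real (card S)))"
    (is "?P \<bind> ?K = density M (\<lambda>z. ennreal (?g z))")
proof -
  have K: "?K \<in> measurable ?P (subprob_algebra M)"
    by (auto simp: space_subprob_algebra intro!: prob_space_imp_subprob_space prob)
  have sets: "sets (?P \<bind> ?K) = sets M"
    by (rule sets_bind_measurable[OF K]) simp
  show ?thesis
  proof (rule measure_eqI)
    fix A assume "A \<in> sets (?P \<bind> ?K)"
    then have A: "A \<in> sets M" by (simp add: sets)
    have "emeasure (?P \<bind> ?K) A = (\<integral>\<^sup>+ i. emeasure (?K i) A \<partial>?P)"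
      using A by (intro emeasure_bind[OF _ K]) simp_all
    also have "\<dots> = (\<Sum>i\<in>S. \<integral>\<^sup>+ z. ennreal (f i z) * indicator A z \<partial>M) / of_nat (card S)"
      using S A by (simp add: nn_integral_pmf_of_set emeasure_density)
    also have "\<dots> = (\<integral>\<^sup>+ z. (\<Sum>i\<in>S. ennreal (f i z) * indicator A z) \<partial>M) / of_nat (card S)"
      using A by (subst nn_integral_sum) auto
    also have "\<dots> = (\<integral>\<^sup>+ z. (\<Sum>i\<in>S. ennreal (f i z) * indicator A z) / of_nat (card S) \<partial>M)"
      using A by (subst nn_integral_divide) auto
    also have "\<dots> = (\<integral>\<^sup>+ z. ennreal (?g z) * indicator A z \<partial>M)"
    proof (rule nn_integral_cong)
      fix z
      have "(\<Sum>i\<in>S. ennreal (f i z) * indicator A z) / of_nat (card S)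
          = (\<Sum>i\<in>S. ennreal (f i z)) / ennreal (real (card S)) * indicator A z"
        by (simp only: sum_distrib_right[symmetric] ennreal_divide_times ennreal_times_divide
            ennreal_of_nat_eq_real_of_nat)
      also have "\<dots> = ennreal (?g z) * indicator A z"
        using S by (simp add: f_nonneg sum_nonneg divide_ennreal card_gt_0_iff)
      finally show "(\<Sum>i\<in>S. ennreal (f i z) * indicator A z) / of_nat (card S) = ennreal (?g z) * indicator A z" .
    qed
    also have "\<dots> = emeasure (density M (\<lambda>z. ennreal (?g z))) A"
      using A by (simp add: emeasure_density)
    finally show "emeasure (?P \<bind> ?K) A = emeasure (density M (\<lambda>z. ennreal (?g z))) A" .
  qed (simp add: sets)
qed

lemma bern_prior_law_density:
  assumes tau: "1 \<le> \<tau>" "\<tau> < n" and pd: "p \<le> d"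
  shows "bern_prior_law n d \<tau> \<theta> p r = density (null_law n d \<tau> \<theta>)
     (\<lambda>z. ennreal ((\<Sum>m\<in>supports d p. cusum_lr n d \<tau> (bern_shift p r m) z) / real (card (supports d p))))"
  unfolding bern_prior_law_def supports_def[symmetric] Z_law_density[OF tau]
  using finite_supports supports_nonempty[OF pd] cusum_lr_measurable_null_law[OF tau]
  by (intro bind_pmf_of_set_density) (simp_all add: cusum_lr_nonneg prob_space_Z_law
      flip: Z_law_density[OF tau])
lemma power2_sum_cusum_lr:
  "(\<Sum>i\<in>S. cusum_lr n d \<tau> (a i) z)\<^sup>2 = (\<Sum>i\<in>S. \<Sum>i'\<in>S.
      exp (cusum_scale n \<tau> * (\<Sum>j\<in>{1..d}. a i j * a i' j)) * cusum_lr n d \<tau> (\<lambda>j. a i j + a i' j) z)"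
  unfolding power2_eq_square sum_product cusum_lr_mult by (simp only: mult.commute)

lemma second_moment_eq_mixture:
  assumes tau: "1 \<le> \<tau>" "\<tau> < n" and pd: "p \<le> d"
  shows "second_moment n d \<tau> \<theta> p r = ennreal ((\<Sum>m\<in>supports d p. \<Sum>m'\<in>supports d p.
      exp (cusum_scale n \<tau> * (\<Sum>j\<in>{1..d}. bern_shift p r m j * bern_shift p r m' j)))
      / (real (card (supports d p)))\<^sup>2)"
proof -
  let ?S = "supports d p" and ?P0 = "null_law n d \<tau> \<theta>"
  let ?N = "real (card ?S)"
  let ?lr = "\<lambda>m. cusum_lr n d \<tau> (bern_shift p r m)"
  let ?lr2 = "\<lambda>m m'. cusum_lr n d \<tau> (\<lambda>j. bern_shift p r m j + bern_shift p r m' j)"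
  let ?c = "\<lambda>m m'. exp (cusum_scale n \<tau> * (\<Sum>j\<in>{1..d}. bern_shift p r m j * bern_shift p r m' j))"
  define g where "g z = (\<Sum>m\<in>?S. ?lr m z) / ?N" for z
  interpret P0: prob_space ?P0 by (rule prob_space_null_law)
  have N: "?N > 0" using finite_supports supports_nonempty[OF pd] by (simp add: card_gt_0_iff)
  have g_nonneg: "0 \<le> g z" for z using N by (simp add: g_def cusum_lr_nonneg sum_nonneg)
  have [measurable]: "cusum_lr n d \<tau> a \<in> borel_measurable ?P0" for a
    using cusum_lr_measurable_null_law[OF tau] .
  have "AE z in ?P0. ennreal (g z) = LR n d \<tau> \<theta> p r z"
    unfolding LR_def g_def
    by (intro P0.RN_deriv_unique) (simp_all add: bern_prior_law_density[OF tau pd])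
  then have "AE z in ?P0. (LR n d \<tau> \<theta> p r z)\<^sup>2 = ennreal ((g z)\<^sup>2)"
    by eventually_elim (simp flip: ennreal_power[OF g_nonneg])
  then have "second_moment n d \<tau> \<theta> p r = (\<integral>\<^sup>+ z. ennreal ((g z)\<^sup>2) \<partial>?P0)"
    unfolding second_moment_def by (rule nn_integral_cong_AE)
  also have "\<dots> = (\<integral>\<^sup>+ z. (\<Sum>m\<in>?S. \<Sum>m'\<in>?S. ennreal (?c m m' / ?N\<^sup>2) * ennreal (?lr2 m m' z)) \<partial>?P0)"
  proof (rule nn_integral_cong)
    fix z
    have "(g z)\<^sup>2 = (\<Sum>m\<in>?S. \<Sum>m'\<in>?S. ?c m m' / ?N\<^sup>2 * ?lr2 m m' z)"
      unfolding g_def power_divide power2_sum_cusum_lr by (simp add: sum_divide_distrib)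
    then have "ennreal ((g z)\<^sup>2) = ennreal (\<Sum>m\<in>?S. \<Sum>m'\<in>?S. ?c m m' / ?N\<^sup>2 * ?lr2 m m' z)"
      by simp
    also have "\<dots> = (\<Sum>m\<in>?S. \<Sum>m'\<in>?S. ennreal (?c m m' / ?N\<^sup>2 * ?lr2 m m' z))"
      by (simp add: sum_ennreal sum_nonneg cusum_lr_nonneg)
    also have "\<dots> = (\<Sum>m\<in>?S. \<Sum>m'\<in>?S. ennreal (?c m m' / ?N\<^sup>2) * ennreal (?lr2 m m' z))"
      by (intro sum.cong refl ennreal_mult) (simp_all add: cusum_lr_nonneg)
    finally show "ennreal ((g z)\<^sup>2) = \<dots>" .
  qed
  also have "\<dots> = (\<Sum>m\<in>?S. \<Sum>m'\<in>?S. ennreal (?c m m' / ?N\<^sup>2) * (\<integral>\<^sup>+ z. ennreal (?lr2 m m' z) \<partial>?P0))"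
    by (simp add: nn_integral_sum nn_integral_cmult)
  also have "\<dots> = ennreal ((\<Sum>m\<in>?S. \<Sum>m'\<in>?S. ?c m m') / ?N\<^sup>2)"
    by (simp add: nn_integral_cusum_lr[OF tau] sum_ennreal sum_nonneg sum_divide_distrib)
  finally show ?thesis .
qed

definition overlap_moment :: "nat \<Rightarrow> nat \<Rightarrow> real \<Rightarrow> real" where
  "overlap_moment d p A = (\<Sum>m\<in>supports d p. \<Sum>m'\<in>supports d p. exp (A * real (card (m \<inter> m'))))
     / (real (card (supports d p)))\<^sup>2"

lemma inner_bern_shift:
  assumes "m \<subseteq> {1..d}" "0 < p"
  shows "(\<Sum>j\<in>{1..d}. bern_shift p r m j * bern_shift p r m' j) = real (card (m \<inter> m')) * (r\<^sup>2 / real p)"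
proof -
  have "(\<Sum>j\<in>{1..d}. bern_shift p r m j * bern_shift p r m' j)
      = (\<Sum>j\<in>{1..d}. if j \<in> m \<inter> m' then r\<^sup>2 / real p else 0)"
    using assms(2) by (intro sum.cong refl) (simp add: bern_shift_def power2_eq_square real_sqrt_mult[symmetric])
  also have "\<dots> = (\<Sum>j\<in>{1..d} \<inter> (m \<inter> m'). r\<^sup>2 / real p)"
    by (rule sum.inter_restrict[symmetric]) simp
  also have "{1..d} \<inter> (m \<inter> m') = m \<inter> m'" using assms(1) by auto
  finally show ?thesis by simp
qed

lemma second_moment_eq_overlap_moment:
  assumes "1 \<le> \<tau>" "\<tau> < n" and "0 < p" "p \<le> d"
  shows "second_moment n d \<tau> \<theta> p r = ennreal (overlap_moment d p (r\<^sup>2 * real n * hfun n \<tau> / real p))"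
proof -
  have "cusum_scale n \<tau> * (\<Sum>j\<in>{1..d}. bern_shift p r m j * bern_shift p r m' j)
      = r\<^sup>2 * real n * hfun n \<tau> / real p * real (card (m \<inter> m'))" if "m \<in> supports d p" for m m'
    using that assms inner_bern_shift[of m d p r m']
    by (simp add: supports_def cusum_scale_eq_hfun)
  then show ?thesis
    unfolding second_moment_eq_mixture[OF assms(1,2,4)] overlap_moment_def
    by (simp cong: sum.cong)
qed

section \<open>Overlap of two random supports\<close>

lemma choose_diff_mult_power_le:
  assumes "k \<le> p" "p \<le> d"
  shows "real ((d - k) choose (p - k)) * real d ^ k \<le> real (d choose p) * real p ^ k"
  using assms
proof (induction k)
  case 0
  then show ?case by simp
next
  case (Suc k)
  have kp: "k < p" and dk: "real (d - k) > 0" using Suc.prems by auto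
  have IH: "real ((d - k) choose (p - k)) * real d ^ k \<le> real (d choose p) * real p ^ k"
    using Suc.IH Suc.prems by simp
  have "(p - k) * ((d - k) choose (p - k)) = (d - k) * ((d - Suc k) choose (p - Suc k))"
    using times_binomial_minus1_eq[of "p - k" "d - k"] kp by simp
  then have "real (p - k) * real ((d - k) choose (p - k)) = real (d - k) * real ((d - Suc k) choose (p - Suc k))"
    by (metis of_nat_mult)
  then have step: "real ((d - Suc k) choose (p - Suc k))
      = real ((d - k) choose (p - k)) * (real (p - k) / real (d - k))"
    using dk by (simp add: field_simps)
  have ratio: "real d * (real (p - k) / real (d - k)) \<le> real p"
    using kp Suc.prems dk mult_left_mono[of "real p" "real d" "real k"]
    by (simp add: divide_le_eq of_nat_diff algebra_simps)
  have "real ((d - Suc k) choose (p - Suc k)) * real d ^ Suc k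
      = real ((d - k) choose (p - k)) * real d ^ k * (real d * (real (p - k) / real (d - k)))"
    by (simp add: step)
  also have "\<dots> \<le> real (d choose p) * real p ^ k * real p"
    using dk by (intro mult_mono[OF IH ratio]) simp_all
  finally show ?case by (simp add: ac_simps)
qed

lemma card_supports_superset_le:
  assumes T: "T \<subseteq> {1..d}" "card T \<le> p" "p \<le> d"
  shows "real (card {m\<in>supports d p. T \<subseteq> m}) * real d ^ card T \<le> real (card (supports d p)) * real p ^ card T"
proof -
  have fT: "finite T" using T finite_subset by blast
  have "inj_on (\<lambda>m. m - T) {m\<in>supports d p. T \<subseteq> m}"
    by (rule inj_onI) (metis (no_types, lifting) Diff_partition mem_Collect_eq)
  moreover have "(\<lambda>m. m - T) ` {m\<in>supports d p. T \<subseteq> m} \<subseteq> {B. B \<subseteq> {1..d} - T \<and> card B = p - card T}"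
    using fT by (auto simp: supports_def card_Diff_subset finite_subset)
  ultimately have "card {m\<in>supports d p. T \<subseteq> m} \<le> card {B. B \<subseteq> {1..d} - T \<and> card B = p - card T}"
    by (intro card_inj_on_le) (auto intro: finite_subset[of _ "Pow ({1..d} - T)"])
  also have "\<dots> = (d - card T) choose (p - card T)"
    using n_subsets[of "{1..d} - T" "p - card T"] T fT by (simp add: card_Diff_subset)
  finally have "real (card {m\<in>supports d p. T \<subseteq> m}) * real d ^ card T
      \<le> real ((d - card T) choose (p - card T)) * real d ^ card T"
    by (intro mult_right_mono) simp_all
  also have "\<dots> \<le> real (card (supports d p)) * real p ^ card T"
    unfolding card_supports using T by (intro choose_diff_mult_power_le) auto
  finally show ?thesis .
qed

lemma power_one_plus_eq_sum_Pow:
  fixes y :: "'a :: comm_semiring_1"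
  assumes "finite A"
  shows "(1 + y) ^ card A = (\<Sum>T\<in>Pow A. y ^ card T)"
  using prod_add[OF assms, of "\<lambda>_. y" "\<lambda>_. 1"] by (simp add: add.commute)

text \<open>Expanding \<open>(1 + y)\<^sup>|\<^sup>m \<^sup>\<inter> \<^sup>m\<^sup>'\<^sup>|\<close> over the subsets \<open>T\<close> of \<open>m \<inter> m'\<close> and swapping the sums,
  each \<open>T \<subseteq> m'\<close> is counted once for every support containing it.\<close>

lemma sum_supports_power_card_inter_le:
  fixes y :: real
  assumes m': "m' \<in> supports d p" and pd: "p \<le> d" and y: "0 \<le> y" and d: "0 < d"
  shows "(\<Sum>m\<in>supports d p. (1 + y) ^ card (m \<inter> m')) \<le> real (card (supports d p)) * (1 + y * real p / real d) ^ p"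
proof -
  let ?S = "supports d p"
  let ?N = "real (card ?S)"
  have fm': "finite m'" and m'd: "m' \<subseteq> {1..d}" and cm': "card m' = p"
    using m' by (auto simp: supports_def intro: finite_subset)
  have "(\<Sum>m\<in>?S. (1 + y) ^ card (m \<inter> m')) = (\<Sum>m\<in>?S. \<Sum>T\<in>Pow m'. if T \<subseteq> m then y ^ card T else 0)"
  proof (rule sum.cong[OF refl])
    fix m
    have "(1 + y) ^ card (m \<inter> m') = (\<Sum>T\<in>Pow (m \<inter> m'). y ^ card T)"
      using fm' by (intro power_one_plus_eq_sum_Pow) simp
    also have "Pow (m \<inter> m') = {T \<in> Pow m'. T \<subseteq> m}" by auto
    also have "(\<Sum>T\<in>{T \<in> Pow m'. T \<subseteq> m}. y ^ card T) = (\<Sum>T\<in>Pow m'. if T \<subseteq> m then y ^ card T else 0)"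
      using fm' by (intro sum.inter_filter) simp
    finally show "(1 + y) ^ card (m \<inter> m') = (\<Sum>T\<in>Pow m'. if T \<subseteq> m then y ^ card T else 0)" .
  qed
  also have "\<dots> = (\<Sum>T\<in>Pow m'. y ^ card T * real (card {m\<in>?S. T \<subseteq> m}))"
    by (subst sum.swap) (simp add: sum.inter_filter[symmetric] finite_supports mult.commute)
  also have "\<dots> \<le> (\<Sum>T\<in>Pow m'. y ^ card T * (?N * (real p / real d) ^ card T))"
  proof (intro sum_mono mult_left_mono)
    fix T assume T: "T \<in> Pow m'"
    then have "card T \<le> card m'" using fm' by (simp add: card_mono)
    then have "real (card {m\<in>?S. T \<subseteq> m}) * real d ^ card T \<le> ?N * real p ^ card T"
      using T m'd cm' pd by (intro card_supports_superset_le) auto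
    then show "real (card {m\<in>?S. T \<subseteq> m}) \<le> ?N * (real p / real d) ^ card T"
      using d by (simp add: power_divide field_simps)
  qed (simp add: y)
  also have "\<dots> = ?N * (\<Sum>T\<in>Pow m'. (y * real p / real d) ^ card T)"
    unfolding sum_distrib_left by (intro sum.cong refl) (simp add: power_mult_distrib power_divide)
  also have "\<dots> = ?N * (1 + y * real p / real d) ^ p"
    using power_one_plus_eq_sum_Pow[OF fm', of "y * real p / real d"] cm' by simp
  finally show ?thesis .
qed

lemma one_le_overlap_moment:
  assumes "p \<le> d" and "0 \<le> A"
  shows "1 \<le> overlap_moment d p A"
proof -
  let ?S = "supports d p"
  have N: "real (card ?S) > 0" using finite_supports supports_nonempty[OF assms(1)] by (simp add: card_gt_0_iff)
  have "(real (card ?S))\<^sup>2 = (\<Sum>m\<in>?S. \<Sum>m'\<in>?S. 1)" by (simp add: power2_eq_square)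
  also have "\<dots> \<le> (\<Sum>m\<in>?S. \<Sum>m'\<in>?S. exp (A * real (card (m \<inter> m'))))"
    using assms(2) by (intro sum_mono) simp
  finally show ?thesis
    using N by (simp add: overlap_moment_def)
qed

lemma overlap_moment_le_exp:
  assumes pd: "p \<le> d" and d: "0 < d" and A: "0 \<le> A"
  shows "overlap_moment d p A \<le> exp ((exp A - 1) * (real p)\<^sup>2 / real d)"
proof -
  let ?S = "supports d p"
  let ?N = "real (card ?S)"
  let ?y = "exp A - 1"
  have N: "?N > 0" using finite_supports supports_nonempty[OF pd] by (simp add: card_gt_0_iff)
  have y: "0 \<le> ?y" using A by simp
  have "(\<Sum>m\<in>?S. \<Sum>m'\<in>?S. exp (A * real (card (m \<inter> m')))) = (\<Sum>m'\<in>?S. \<Sum>m\<in>?S. (1 + ?y) ^ card (m \<inter> m'))"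
    by (subst sum.swap) (simp add: exp_of_nat_mult[symmetric] mult.commute)
  also have "\<dots> \<le> (\<Sum>m'\<in>?S. ?N * (1 + ?y * real p / real d) ^ p)"
    by (intro sum_mono sum_supports_power_card_inter_le pd y d)
  also have "\<dots> = ?N\<^sup>2 * (1 + ?y * real p / real d) ^ p"
    by (simp add: power2_eq_square)
  also have "\<dots> \<le> ?N\<^sup>2 * exp (?y * real p / real d) ^ p"
    using y d by (intro mult_left_mono power_mono) (simp_all add: exp_ge_add_one_self)
  also have "exp (?y * real p / real d) ^ p = exp (?y * (real p)\<^sup>2 / real d)"
    by (simp add: exp_of_nat_mult[symmetric] power2_eq_square field_simps)
  finally show ?thesis
    using N by (simp add: overlap_moment_def divide_le_eq mult.commute)
qed

section \<open>Asymptotics\<close>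

lemma overlap_exponent_le_powr:
  fixes d p C k \<beta> A :: real
  assumes p: "0 < p" "p < d" and pC: "p \<le> C * d powr (1 - \<beta>)"
    and k: "0 \<le> k" "k < 2" and A: "A \<le> k * ln (d / p)"
  shows "(exp A - 1) * p\<^sup>2 / d \<le> C powr (2 - k) * d powr (- (2 * \<beta> - 1 - \<beta> * k))"
proof -
  have d: "0 < d" using p by simp
  have C: "0 < C" using p pC d by (smt (verit) mult_nonpos_nonneg powr_ge_zero)
  have "exp A \<le> exp (k * ln (d / p))" using A by simp
  also have "\<dots> = (d / p) powr k" using p d by (simp add: powr_def)
  finally have "(exp A - 1) * p\<^sup>2 / d \<le> (d / p) powr k * p\<^sup>2 / d"
    using d by (intro divide_right_mono mult_right_mono) simp_all
  also have "\<dots> = d powr k / p powr k * p powr 2 / d powr 1"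
    using p d by (simp add: powr_divide powr_numeral)
  also have "\<dots> = d powr (k - 1) * p powr (2 - k)"
    by (simp add: powr_diff)
  also have "\<dots> \<le> d powr (k - 1) * (C * d powr (1 - \<beta>)) powr (2 - k)"
    using p pC k by (intro mult_left_mono powr_mono2) simp_all
  also have "\<dots> = C powr (2 - k) * (d powr (k - 1) * d powr ((1 - \<beta>) * (2 - k)))"
    using C d by (simp add: powr_mult powr_powr)
  also have "\<dots> = C powr (2 - k) * d powr (- (2 * \<beta> - 1 - \<beta> * k))"
    by (simp add: powr_add[symmetric] algebra_simps)
  finally show ?thesis .
qed

text \<open>With \<open>A \<le> k ln(d/p)\<close> the exponent \<open>(e\<^sup>A - 1) p\<^sup>2/d\<close> is at most \<open>C\<^sup>2\<^sup>-\<^sup>k d\<^sup>-\<^sup>\<epsilon>\<close>, and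
  \<open>\<epsilon> = 2\<beta> - 1 - \<beta>k\<close> is positive exactly when \<open>k < 2 - 1/\<beta>\<close>.\<close>

lemma overlap_exponent_tendsto_zero:
  fixes p :: "nat \<Rightarrow> nat" and A :: "nat \<Rightarrow> real"
  assumes \<beta>: "0 < \<beta>" and k: "0 \<le> k" "k < 2 - 1 / \<beta>"
    and ev: "\<forall>\<^sub>F d in sequentially. 0 < p d \<and> p d < d \<and> real (p d) \<le> C * real d powr (1 - \<beta>)
               \<and> 0 \<le> A d \<and> A d \<le> k * ln (real d / real (p d))"
  shows "((\<lambda>d. (exp (A d) - 1) * (real (p d))\<^sup>2 / real d) \<longlongrightarrow> 0) sequentially"
proof (rule tendsto_sandwich)
  define \<epsilon> where "\<epsilon> = 2 * \<beta> - 1 - \<beta> * k"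
  have "\<beta> * k < \<beta> * (2 - 1 / \<beta>)" using k \<beta> by (intro mult_strict_left_mono) simp_all
  also have "\<dots> = 2 * \<beta> - 1" using \<beta> by (simp add: field_simps)
  finally have \<epsilon>: "0 < \<epsilon>" by (simp add: \<epsilon>_def)
  have k2: "k < 2" using k \<beta> by (smt (verit) divide_pos_pos)
  show "\<forall>\<^sub>F d in sequentially. (exp (A d) - 1) * (real (p d))\<^sup>2 / real d \<le> C powr (2 - k) * real d powr (- \<epsilon>)"
  proof (use ev in eventually_elim)
    case (elim d)
    then show ?case
      unfolding \<epsilon>_def using k k2 by (intro overlap_exponent_le_powr) simp_all
  qed
  show "\<forall>\<^sub>F d in sequentially. 0 \<le> (exp (A d) - 1) * (real (p d))\<^sup>2 / real d"
    using ev by eventually_elim simp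
  have "((\<lambda>d. C powr (2 - k) * real d powr (- \<epsilon>)) \<longlongrightarrow> C powr (2 - k) * 0) sequentially"
    using \<epsilon> by (intro tendsto_mult tendsto_const tendsto_neg_powr filterlim_real_sequentially) simp
  then show "((\<lambda>d. C powr (2 - k) * real d powr (- \<epsilon>)) \<longlongrightarrow> 0) sequentially" by simp
qed simp

lemma overlap_moment_tendsto_one:
  fixes p :: "nat \<Rightarrow> nat" and A :: "nat \<Rightarrow> real"
  assumes ev: "\<forall>\<^sub>F d in sequentially. p d \<le> d \<and> 0 < d \<and> 0 \<le> A d"
    and lim: "((\<lambda>d. (exp (A d) - 1) * (real (p d))\<^sup>2 / real d) \<longlongrightarrow> 0) sequentially"
  shows "((\<lambda>d. overlap_moment d (p d) (A d)) \<longlongrightarrow> 1) sequentially"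
proof (rule tendsto_sandwich)
  show "\<forall>\<^sub>F d in sequentially. 1 \<le> overlap_moment d (p d) (A d)"
    using ev by eventually_elim (simp add: one_le_overlap_moment)
  show "\<forall>\<^sub>F d in sequentially. overlap_moment d (p d) (A d) \<le> exp ((exp (A d) - 1) * (real (p d))\<^sup>2 / real d)"
    using ev by eventually_elim (simp add: overlap_moment_le_exp)
  show "((\<lambda>d. exp ((exp (A d) - 1) * (real (p d))\<^sup>2 / real d)) \<longlongrightarrow> 1) sequentially"
    using tendsto_exp[OF lim] by simp
qed simp

lemma eventually_pos_less_of_powr_bounds:
  fixes p :: "nat \<Rightarrow> nat"
  assumes "0 < \<beta>" "0 < c" "0 < C"
    and "\<forall>\<^sub>F d in sequentially. c * real d powr (1 - \<beta>) \<le> real (p d) \<and> real (p d) \<le> C * real d powr (1 - \<beta>)"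
  shows "\<forall>\<^sub>F d in sequentially. 0 < p d \<and> p d < d"
proof -
  obtain N :: nat where N: "C powr (1 / \<beta>) < real N" using reals_Archimedean2 by blast
  have "\<forall>\<^sub>F d in sequentially. C < real d powr \<beta> \<and> 0 < d"
    using eventually_ge_at_top[of "Suc N"]
  proof eventually_elim
    case (elim d)
    have "C = (C powr (1 / \<beta>)) powr \<beta>" using assms by (simp add: powr_powr)
    also have "\<dots> < real d powr \<beta>" using elim N assms(1) by (intro powr_less_mono2) simp_all
    finally show ?case using elim by simp
  qed
  with assms(4) show ?thesis
  proof eventually_elim
    case (elim d)
    then have "C * real d powr (1 - \<beta>) < real d powr \<beta> * real d powr (1 - \<beta>)"
      by (intro mult_strict_right_mono) simp_all
    also have "\<dots> = real d" using elim by (simp add: powr_add[symmetric])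
    finally show ?case using elim assms(2) by (smt (verit) of_nat_0_less_iff of_nat_less_iff
        mult_pos_pos powr_gt_zero)
  qed
qed

lemma limsup_less_imp_eventually_less:
  fixes f :: "nat \<Rightarrow> real"
  assumes "limsup (\<lambda>x. ereal (f x)) < ereal b" "0 < b"
  obtains k where "0 \<le> k" "k < b" "\<forall>\<^sub>F x in sequentially. f x < k"
proof -
  obtain \<kappa> where "limsup (\<lambda>x. ereal (f x)) < ereal \<kappa>" "\<kappa> < b"
    using ereal_dense2[OF assms(1)] by auto
  moreover have "\<forall>\<^sub>F x in sequentially. f x < max \<kappa> 0"
    using Limsup_lessD[OF calculation(1)] by eventually_elim simp
  ultimately show ?thesis
    using that[of "max \<kappa> 0"] assms(2) by simp
qed

theorem mainTheorem11:
  fixes \<beta> :: real and n p \<tau> :: "nat \<Rightarrow> nat" and r :: "nat \<Rightarrow> real"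
    and \<theta> :: "nat \<Rightarrow> nat \<Rightarrow> real"
  assumes "1/2 < \<beta>" and "\<beta> < 1"
    and "\<forall>d. 2 \<le> n d"
    and "\<forall>d. 1 \<le> \<tau> d \<and> \<tau> d \<le> n d - 1"
    and "\<exists>c C. 0 < c \<and> 0 < C \<and> (\<forall>\<^sub>F d in sequentially.
            c * real d powr (1 - \<beta>) \<le> real (p d) \<and> real (p d) \<le> C * real d powr (1 - \<beta>))"
    and "limsup (\<lambda>d. ereal ((r d)\<^sup>2 * real (n d) * hfun (n d) (\<tau> d)
            / (real (p d) * ln (real d / real (p d))))) < ereal (2 - 1 / \<beta>)"
  shows "((\<lambda>d. second_moment (n d) d (\<tau> d) (\<theta> d) (p d) (r d)) \<longlongrightarrow> 1) sequentially"
proof -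
  define A where "A d = (r d)\<^sup>2 * real (n d) * hfun (n d) (\<tau> d) / real (p d)" for d
  have \<beta>: "0 < \<beta>" "0 < 2 - 1 / \<beta>" using assms(1) by (simp_all add: field_simps)
  have \<tau>: "1 \<le> \<tau> d" "\<tau> d < n d" for d
    using assms(3,4)[rule_format, of d] by auto
  obtain c C where cC: "0 < c" "0 < C" and p_bounds: "\<forall>\<^sub>F d in sequentially.
      c * real d powr (1 - \<beta>) \<le> real (p d) \<and> real (p d) \<le> C * real d powr (1 - \<beta>)"
    using assms(5) by blast
  obtain k where k: "0 \<le> k" "k < 2 - 1 / \<beta>" and ratio: "\<forall>\<^sub>F d in sequentially.
      (r d)\<^sup>2 * real (n d) * hfun (n d) (\<tau> d) / (real (p d) * ln (real d / real (p d))) < k"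
    using limsup_less_imp_eventually_less[OF assms(6) \<beta>(2)] by blast
  have ev: "\<forall>\<^sub>F d in sequentially. 0 < p d \<and> p d < d \<and> real (p d) \<le> C * real d powr (1 - \<beta>)
      \<and> 0 \<le> A d \<and> A d \<le> k * ln (real d / real (p d))"
    using eventually_pos_less_of_powr_bounds[OF \<beta>(1) cC p_bounds] p_bounds ratio
  proof eventually_elim
    case (elim d)
    then have "0 < real (p d)" "0 < ln (real d / real (p d))" by simp_all
    with elim show ?case
      using hfun_nonneg[of "\<tau> d" "n d"] \<tau>[of d] by (simp add: A_def field_simps)
  qed
  have "((\<lambda>d. overlap_moment d (p d) (A d)) \<longlongrightarrow> 1) sequentially"
  proof (rule overlap_moment_tendsto_one)
    show "\<forall>\<^sub>F d in sequentially. p d \<le> d \<and> 0 < d \<and> 0 \<le> A d"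
      using ev by eventually_elim auto
  qed (rule overlap_exponent_tendsto_zero[OF \<beta>(1) k ev])
  then have "((\<lambda>d. ennreal (overlap_moment d (p d) (A d))) \<longlongrightarrow> 1) sequentially"
    using tendsto_ennrealI by fastforce
  moreover have "\<forall>\<^sub>F d in sequentially. ennreal (overlap_moment d (p d) (A d)) = second_moment (n d) d (\<tau> d) (\<theta> d) (p d) (r d)"
    using ev by eventually_elim (simp add: A_def second_moment_eq_overlap_moment[OF \<tau>])
  ultimately show ?thesis by (rule Lim_transform_eventually)
qed

end
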